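(* Let $G=\Box_{i=1}^{l}G_i$ be a Cartesian product of stars $G_1,\dots,G_l$, where the vertices of each $G_i$ are labelled $0,1,\dots,|V(G_i)|-1$ with $0$ the star-center of $G_i$, and let $v_G$ be the vertex with coordinates $(0,\dots,0)$. Then for every integer $k\geq 0$, the induced subgraph $\langle N_k^G[v_G]\rangle$ is an isometric subgraph of $G$.
   Context: A star is a connected acyclic graph on vertex set $V$ having a vertex (its star-center) of degree $|V|-1$, all other vertices having degree $1$. The Cartesian product $G\Box H$ has vertex set $V(G)\times V(H)$, with $(g_1,h_1)$ adjacent to $(g_2,h_2)$ iff either $(g_1,g_2)\in E(G)$ and $h_1=h_2$, or $(h_1,h_2)\in E(H)$ and $g_1=g_2$; vertices of $\Box_{i}G_i$ are written as coordinate vectors. $N_k^G[v]=\{x\in V(G): d_G(v,x)\le k\}$ and $\langle N_k^G[v]\rangle$ is the subgraph it induces. A subgraph $H\subseteq G$ is isometric if $d_H(x,y)=d_G(x,y)$ for all $x,y\in V(H)$. *)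

theory Defs
  imports Main "HOL-Library.Extended_Nat"
begin

type_synonym 'a graph = "'a set \<times> ('a \<Rightarrow> 'a \<Rightarrow> bool)"

definition verts :: "'a graph \<Rightarrow> 'a set" where "verts G = fst G"
definition adj :: "'a graph \<Rightarrow> 'a \<Rightarrow> 'a \<Rightarrow> bool" where "adj G = snd G"

definition walk :: "'a graph \<Rightarrow> 'a list \<Rightarrow> bool" where
  "walk G p \<longleftrightarrow> p \<noteq> [] \<and> set p \<subseteq> verts G \<and>
     (\<forall>i. Suc i < length p \<longrightarrow> adj G (p ! i) (p ! Suc i))"

text \<open>Graph distance (infinite if no walk exists).\<close>
definition gdist :: "'a graph \<Rightarrow> 'a \<Rightarrow> 'a \<Rightarrow> enat" where
  "gdist G x y = (INF p \<in> {p. walk G p \<and> hd p = x \<and> last p = y}. enat (length p - 1))"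

definition closed_nbhd :: "'a graph \<Rightarrow> 'a \<Rightarrow> nat \<Rightarrow> 'a set" where
  "closed_nbhd G v k = {x \<in> verts G. gdist G v x \<le> enat k}"

definition induced :: "'a graph \<Rightarrow> 'a set \<Rightarrow> 'a graph" where
  "induced G S = (S \<inter> verts G, \<lambda>a b. a \<in> S \<and> b \<in> S \<and> adj G a b)"

definition isometric_subgraph :: "'a graph \<Rightarrow> 'a graph \<Rightarrow> bool" where
  "isometric_subgraph H G \<longleftrightarrow> verts H \<subseteq> verts G \<and>
     (\<forall>a b. adj H a b \<longrightarrow> adj G a b) \<and>
     (\<forall>x \<in> verts H. \<forall>y \<in> verts H. gdist H x y = gdist G x y)"

definition star :: "nat \<Rightarrow> nat graph" where
  "star n = ({..<n}, \<lambda>a b. a < n \<and> b < n \<and> a \<noteq> b \<and> (a = 0 \<or> b = 0))"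

definition cart_prod :: "'a graph list \<Rightarrow> 'a list graph" where
  "cart_prod Gs = ({xs. length xs = length Gs \<and> (\<forall>i < length Gs. xs ! i \<in> verts (Gs ! i))},
     \<lambda>xs ys. length xs = length Gs \<and> length ys = length Gs \<and>
       (\<exists>i < length Gs. adj (Gs ! i) (xs ! i) (ys ! i) \<and>
          (\<forall>j < length Gs. j \<noteq> i \<longrightarrow> xs ! j = ys ! j)))"

end

theory Submission
  imports Defs
begin

text \<open>In a star, distinct leaves are at distance 2 and every other pair of distinct vertices at
distance 1; in a Cartesian product the distance is the sum of the coordinate distances, and the
distance from the origin counts the non-zero coordinates. Between any two vertices there is a
geodesic that first resets to 0 the coordinates of the start that disagree with the target and
only then sets the remaining coordinates to their target values. Along it the number of non-zero
coordinates first decreases and then increases, so the geodesic never leaves a ball around the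
origin that contains both ends.\<close>

lemma walk_Cons:
  assumes "p \<noteq> []"
  shows "walk G (a # p) \<longleftrightarrow> a \<in> verts G \<and> adj G a (hd p) \<and> walk G p"
proof -
  have "(\<forall>i. Suc i < length (a # p) \<longrightarrow> adj G ((a # p) ! i) ((a # p) ! Suc i)) \<longleftrightarrow>
        adj G a (hd p) \<and> (\<forall>i. Suc i < length p \<longrightarrow> adj G (p ! i) (p ! Suc i))"
    using assms by (auto simp: hd_conv_nth nth_Cons split: nat.splits)
  then show ?thesis
    using assms unfolding walk_def by auto
qed

lemma walk_induced: "walk (induced G S) p \<longleftrightarrow> walk G p \<and> set p \<subseteq> S"
  unfolding walk_def induced_def verts_def adj_def by (auto simp: nth_mem)

lemma gdist_le_walk:
  assumes "walk G p" "hd p = x" "last p = y"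
  shows "gdist G x y \<le> enat (length p - 1)"
  unfolding gdist_def using assms by (intro INF_lower) auto

lemma walk_length_lower_bound:
  fixes D :: "'a \<Rightarrow> 'a \<Rightarrow> nat"
  assumes refl: "\<And>x. D x x = 0"
    and triangle: "\<And>x y z. D x z \<le> D x y + D y z"
    and adj: "\<And>x y. adj G x y \<Longrightarrow> D x y \<le> 1"
    and "walk G p"
  shows "D (hd p) (last p) \<le> length p - 1"
  using \<open>walk G p\<close>
proof (induction p)
  case Nil
  then show ?case by (simp add: walk_def)
next
  case (Cons a q)
  show ?case
  proof (cases "q = []")
    case True
    then show ?thesis by (simp add: refl)
  next
    case False
    with Cons.prems have "adj G a (hd q)" "walk G q"
      by (simp_all add: walk_Cons)
    then have "D a (last q) \<le> 1 + (length q - 1)"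
      using triangle[of a "last q" "hd q"] adj Cons.IH by fastforce
    with False show ?thesis by simp
  qed
qed

lemma gdist_lower_bound:
  fixes D :: "'a \<Rightarrow> 'a \<Rightarrow> nat"
  assumes "\<And>x. D x x = 0" "\<And>x y z. D x z \<le> D x y + D y z"
    and "\<And>x y. adj G x y \<Longrightarrow> D x y \<le> 1"
  shows "enat (D x y) \<le> gdist G x y"
  unfolding gdist_def
proof (rule INF_greatest)
  fix p assume "p \<in> {p. walk G p \<and> hd p = x \<and> last p = y}"
  then show "enat (D x y) \<le> enat (length p - 1)"
    using walk_length_lower_bound[of D G p, OF assms] by simp
qed

lemma walk_descent:
  fixes D :: "'a \<Rightarrow> 'a \<Rightarrow> nat" and W :: "'a \<Rightarrow> 'b::linorder"
  assumes zero: "\<And>x y. x \<in> verts G \<Longrightarrow> y \<in> verts G \<Longrightarrow> D x y = 0 \<Longrightarrow> x = y"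
    and step: "\<And>x y. x \<in> verts G \<Longrightarrow> y \<in> verts G \<Longrightarrow> D x y \<noteq> 0 \<Longrightarrow>
      \<exists>x'. x' \<in> verts G \<and> adj G x x' \<and> Suc (D x' y) = D x y \<and> W x' \<le> max (W x) (W y)"
    and "x \<in> verts G" "y \<in> verts G"
  shows "\<exists>p. walk G p \<and> hd p = x \<and> last p = y \<and> length p = Suc (D x y) \<and>
    (\<forall>z \<in> set p. W z \<le> max (W x) (W y))"
  using \<open>x \<in> verts G\<close>
proof (induction "D x y" arbitrary: x)
  case 0
  then have "x = y" using zero \<open>y \<in> verts G\<close> by simp
  with 0 show ?case by (intro exI[of _ "[x]"]) (auto simp: walk_def)
next
  case (Suc n)
  then have "D x y \<noteq> 0" by simp
  then obtain x' where x':
    "x' \<in> verts G" "adj G x x'" "Suc (D x' y) = D x y" "W x' \<le> max (W x) (W y)"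
    using step[OF Suc.prems \<open>y \<in> verts G\<close>] by blast
  moreover have "n = D x' y"
    using Suc.hyps(2) x'(3) by simp
  ultimately obtain p where p: "walk G p" "hd p = x'" "last p = y" "length p = Suc (D x' y)"
    "\<forall>z \<in> set p. W z \<le> max (W x') (W y)"
    using Suc.hyps(1) by blast
  have "p \<noteq> []" using p(4) by auto
  moreover have "\<forall>z \<in> set p. W z \<le> max (W x) (W y)"
    using p(5) x'(4) by (auto simp: max_def split: if_splits)
  ultimately show ?case
    using p x' Suc.prems by (intro exI[of _ "x # p"]) (auto simp: walk_Cons)
qed

lemma isometric_induced_subgraphI:
  assumes "\<And>x y. x \<in> S \<inter> verts G \<Longrightarrow> y \<in> S \<inter> verts G \<Longrightarrow>
    \<exists>p. walk G p \<and> set p \<subseteq> S \<and> hd p = x \<and> last p = y \<and> enat (length p - 1) \<le> gdist G x y"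
  shows "isometric_subgraph (induced G S) G"
  unfolding isometric_subgraph_def
proof (intro conjI ballI allI impI)
  show "verts (induced G S) \<subseteq> verts G" by (simp add: induced_def verts_def)
  show "adj G a b" if "adj (induced G S) a b" for a b
    using that by (simp add: induced_def adj_def)
  fix x y assume "x \<in> verts (induced G S)" "y \<in> verts (induced G S)"
  then obtain p where p: "walk G p" "set p \<subseteq> S" "hd p = x" "last p = y"
    "enat (length p - 1) \<le> gdist G x y"
    using assms by (fastforce simp: induced_def verts_def)
  have "gdist (induced G S) x y \<le> enat (length p - 1)"
    using p by (intro gdist_le_walk) (simp_all add: walk_induced)
  then have "gdist (induced G S) x y \<le> gdist G x y" using p(5) by (rule order_trans)
  moreover have "gdist G x y \<le> gdist (induced G S) x y"
    unfolding gdist_def by (rule INF_superset_mono) (auto simp: walk_induced)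
  ultimately show "gdist (induced G S) x y = gdist G x y" by (rule antisym)
qed

definition star_dist :: "nat \<Rightarrow> nat \<Rightarrow> nat" where
  "star_dist a b = (if a = b then 0 else if a = 0 \<or> b = 0 then 1 else 2)"

definition star_prod_dist :: "nat \<Rightarrow> nat list \<Rightarrow> nat list \<Rightarrow> nat" where
  "star_prod_dist n x y = (\<Sum>i<n. star_dist (x ! i) (y ! i))"

abbreviation star_prod :: "nat list \<Rightarrow> nat list graph" where
  "star_prod ns \<equiv> cart_prod (map star ns)"

lemma verts_star_prod:
  "x \<in> verts (star_prod ns) \<longleftrightarrow> length x = length ns \<and> (\<forall>i < length ns. x ! i < ns ! i)"
  unfolding cart_prod_def verts_def star_def by auto

lemma adj_star_prod:
  "adj (star_prod ns) x y \<longleftrightarrow> length x = length ns \<and> length y = length ns \<and>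
    (\<exists>i < length ns. x ! i < ns ! i \<and> y ! i < ns ! i \<and> x ! i \<noteq> y ! i \<and> (x ! i = 0 \<or> y ! i = 0) \<and>
      (\<forall>j < length ns. j \<noteq> i \<longrightarrow> x ! j = y ! j))"
  unfolding cart_prod_def adj_def star_def by auto

lemma star_prod_dist_self: "star_prod_dist n x x = 0"
  by (simp add: star_prod_dist_def star_dist_def)

lemma star_prod_dist_commute: "star_prod_dist n x y = star_prod_dist n y x"
  unfolding star_prod_dist_def star_dist_def by (intro sum.cong) auto

lemma star_prod_dist_triangle: "star_prod_dist n x z \<le> star_prod_dist n x y + star_prod_dist n y z"
  unfolding star_prod_dist_def sum.distrib[symmetric]
  by (intro sum_mono) (simp add: star_dist_def)

lemma star_prod_dist_eq_0:
  assumes "star_prod_dist n x y = 0" "length x = n" "length y = n"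
  shows "x = y"
proof (rule nth_equalityI)
  fix i assume "i < length x"
  then have "star_dist (x ! i) (y ! i) = 0"
    using assms by (simp add: star_prod_dist_def)
  then show "x ! i = y ! i" by (simp add: star_dist_def split: if_splits)
qed (simp add: assms)

lemma star_prod_dist_update:
  assumes "i < n" "i < length x"
  shows "star_prod_dist n (x[i := v]) y + star_dist (x ! i) (y ! i) =
    star_prod_dist n x y + star_dist v (y ! i)"
proof -
  have "star_prod_dist n x' y =
      star_dist (x' ! i) (y ! i) + (\<Sum>j \<in> {..<n} - {i}. star_dist (x' ! j) (y ! j))" for x'
    unfolding star_prod_dist_def using assms(1) by (simp add: sum.remove)
  moreover have "(\<Sum>j \<in> {..<n} - {i}. star_dist (x[i := v] ! j) (y ! j)) =
      (\<Sum>j \<in> {..<n} - {i}. star_dist (x ! j) (y ! j))"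
    by (intro sum.cong) auto
  ultimately show ?thesis
    using assms(2) by simp
qed

lemma star_prod_dist_le_1_if_adj:
  assumes "adj (star_prod ns) x y"
  shows "star_prod_dist (length ns) x y \<le> 1"
proof -
  from assms obtain i where i: "i < length ns" "length x = length ns" "x ! i = 0 \<or> y ! i = 0"
    and y: "y = x[i := y ! i]"
    unfolding adj_star_prod by (force intro: nth_equalityI simp: nth_list_update)
  have "star_prod_dist (length ns) (x[i := y ! i]) x + star_dist (x ! i) (x ! i) =
        star_prod_dist (length ns) x x + star_dist (y ! i) (x ! i)"
    using star_prod_dist_update[of i "length ns" x "y ! i" x] i by simp
  then have "star_prod_dist (length ns) (x[i := y ! i]) x \<le> 1"
    using i(3) by (auto simp: star_prod_dist_self star_dist_def)
  then show ?thesis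
    using y by (metis star_prod_dist_commute)
qed

lemma star_prod_dist_origin_mono:
  assumes "\<forall>j < n. x ! j \<noteq> 0 \<longrightarrow> y ! j \<noteq> 0"
  shows "star_prod_dist n (replicate n 0) x \<le> star_prod_dist n (replicate n 0) y"
  unfolding star_prod_dist_def using assms by (intro sum_mono) (auto simp: star_dist_def)

lemma adj_star_prod_update:
  assumes "x \<in> verts (star_prod ns)" "i < length ns" "v < ns ! i" "x ! i \<noteq> v" "x ! i = 0 \<or> v = 0"
  shows "x[i := v] \<in> verts (star_prod ns)" "adj (star_prod ns) x (x[i := v])"
  using assms by (auto simp: verts_star_prod adj_star_prod nth_list_update)

lemma star_prod_geodesic_step:
  fixes ns :: "nat list"
  defines "D \<equiv> star_prod_dist (length ns)"
  defines "W \<equiv> star_prod_dist (length ns) (replicate (length ns) 0)"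
  assumes x: "x \<in> verts (star_prod ns)" and y: "y \<in> verts (star_prod ns)" and "D x y \<noteq> 0"
  shows "\<exists>x'. x' \<in> verts (star_prod ns) \<and> adj (star_prod ns) x x' \<and> Suc (D x' y) = D x y \<and>
    W x' \<le> max (W x) (W y)"
proof -
  have len: "length x = length ns" "length y = length ns"
    and bounds: "\<forall>i < length ns. x ! i < ns ! i" "\<forall>i < length ns. y ! i < ns ! i"
    using x y by (simp_all add: verts_star_prod)
  consider (reset) i where "i < length ns" "x ! i \<noteq> 0" "x ! i \<noteq> y ! i"
    | (agree) "\<forall>i < length ns. x ! i \<noteq> 0 \<longrightarrow> x ! i = y ! i"
    by blast
  then show ?thesis
  proof cases
    case reset
    let ?x' = "x[i := 0]"
    have "D ?x' y + star_dist (x ! i) (y ! i) = D x y + star_dist 0 (y ! i)"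
      unfolding D_def using reset len by (intro star_prod_dist_update) simp_all
    moreover have "star_dist (x ! i) (y ! i) = Suc (star_dist 0 (y ! i))"
      using reset by (simp add: star_dist_def)
    moreover have "W ?x' \<le> W x"
      unfolding W_def using len reset(1)
      by (intro star_prod_dist_origin_mono) (auto simp: nth_list_update)
    ultimately show ?thesis
      using adj_star_prod_update[OF x reset(1), of 0] reset bounds
      by (intro exI[of _ ?x']) auto
  next
    case agree
    have "x \<noteq> y"
      using \<open>D x y \<noteq> 0\<close> by (auto simp: D_def star_prod_dist_self)
    then obtain i where i: "i < length ns" "x ! i \<noteq> y ! i"
      using len by (metis nth_equalityI)
    with agree have "x ! i = 0" by blast
    let ?x' = "x[i := y ! i]"
    have "D ?x' y + star_dist (x ! i) (y ! i) = D x y + star_dist (y ! i) (y ! i)"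
      unfolding D_def using i len by (intro star_prod_dist_update) simp_all
    moreover have "star_dist (x ! i) (y ! i) = 1" "star_dist (y ! i) (y ! i) = 0"
      using i \<open>x ! i = 0\<close> by (simp_all add: star_dist_def)
    moreover have "W ?x' \<le> W y"
      unfolding W_def using agree len i(1)
      by (intro star_prod_dist_origin_mono) (auto simp: nth_list_update)
    ultimately show ?thesis
      using adj_star_prod_update[OF x i(1), of "y ! i"] i \<open>x ! i = 0\<close> bounds
      by (intro exI[of _ ?x']) auto
  qed
qed

lemma star_prod_geodesic:
  fixes ns :: "nat list"
  defines "W \<equiv> star_prod_dist (length ns) (replicate (length ns) 0)"
  assumes "x \<in> verts (star_prod ns)" "y \<in> verts (star_prod ns)"
  shows "\<exists>p. walk (star_prod ns) p \<and> hd p = x \<and> last p = y \<and>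
    length p = Suc (star_prod_dist (length ns) x y) \<and> (\<forall>z \<in> set p. W z \<le> max (W x) (W y))"
proof (rule walk_descent[OF _ _ assms(2,3)])
  show "x' = y'" if "x' \<in> verts (star_prod ns)" "y' \<in> verts (star_prod ns)"
    "star_prod_dist (length ns) x' y' = 0" for x' y'
    using that by (simp add: verts_star_prod star_prod_dist_eq_0)
  show "\<exists>x''. x'' \<in> verts (star_prod ns) \<and> adj (star_prod ns) x' x'' \<and>
      Suc (star_prod_dist (length ns) x'' y') = star_prod_dist (length ns) x' y' \<and>
      W x'' \<le> max (W x') (W y')"
    if "x' \<in> verts (star_prod ns)" "y' \<in> verts (star_prod ns)"
      "star_prod_dist (length ns) x' y' \<noteq> 0" for x' y'
    unfolding W_def using that by (rule star_prod_geodesic_step)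
qed

lemma gdist_star_prod:
  assumes "x \<in> verts (star_prod ns)" "y \<in> verts (star_prod ns)"
  shows "gdist (star_prod ns) x y = star_prod_dist (length ns) x y"
proof (rule antisym)
  obtain p where "walk (star_prod ns) p" "hd p = x" "last p = y"
    "length p = Suc (star_prod_dist (length ns) x y)"
    using star_prod_geodesic[OF assms] by blast
  then show "gdist (star_prod ns) x y \<le> star_prod_dist (length ns) x y"
    using gdist_le_walk by fastforce
  show "enat (star_prod_dist (length ns) x y) \<le> gdist (star_prod ns) x y"
    by (intro gdist_lower_bound star_prod_dist_self star_prod_dist_triangle star_prod_dist_le_1_if_adj)
qed

lemma closed_nbhd_star_prod_origin:
  assumes "\<forall>n \<in> set ns. n \<ge> 1"
  shows "closed_nbhd (star_prod ns) (replicate (length ns) 0) k =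
    {x \<in> verts (star_prod ns). star_prod_dist (length ns) (replicate (length ns) 0) x \<le> k}"
proof -
  have "replicate (length ns) 0 \<in> verts (star_prod ns)"
    using assms by (simp add: verts_star_prod Suc_le_eq)
  then show ?thesis
    by (auto simp: closed_nbhd_def gdist_star_prod)
qed

theorem lemma3p6:
  fixes ns :: "nat list" and k :: nat
  assumes "\<forall>n \<in> set ns. n \<ge> 1"
  shows "isometric_subgraph
           (induced (cart_prod (map star ns))
                    (closed_nbhd (cart_prod (map star ns)) (replicate (length ns) 0) k))
           (cart_prod (map star ns))"
proof (rule isometric_induced_subgraphI)
  let ?W = "star_prod_dist (length ns) (replicate (length ns) 0)"
  note ball = closed_nbhd_star_prod_origin[OF assms]
  fix x y
  assume "x \<in> closed_nbhd (star_prod ns) (replicate (length ns) 0) k \<inter> verts (star_prod ns)"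
    and "y \<in> closed_nbhd (star_prod ns) (replicate (length ns) 0) k \<inter> verts (star_prod ns)"
  then have x: "x \<in> verts (star_prod ns)" "?W x \<le> k" and y: "y \<in> verts (star_prod ns)" "?W y \<le> k"
    unfolding ball by auto
  obtain p where p: "walk (star_prod ns) p" "hd p = x" "last p = y"
    "length p = Suc (star_prod_dist (length ns) x y)" "\<forall>z \<in> set p. ?W z \<le> max (?W x) (?W y)"
    using star_prod_geodesic[OF x(1) y(1)] by blast
  have "set p \<subseteq> closed_nbhd (star_prod ns) (replicate (length ns) 0) k"
    using p(1,5) x(2) y(2) unfolding ball walk_def by fastforce
  moreover have "enat (length p - 1) \<le> gdist (star_prod ns) x y"
    using p(4) by (simp add: gdist_star_prod x y)
  ultimately show "\<exists>p. walk (star_prod ns) p \<and>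
      set p \<subseteq> closed_nbhd (star_prod ns) (replicate (length ns) 0) k \<and> hd p = x \<and> last p = y \<and> enat (length p - 1) \<le> gdist (star_prod ns) x y"
    using p by blast
qed

end
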